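(* Let $\mathcal{D}$ be a finite set of disks in the plane, and let $(C_1,C_2)$ be a pair of congruent disks of smallest possible common radius such that every $D\in\mathcal{D}$ satisfies $D\subseteq C_1$ or $D\subseteq C_2$. Assume the centers of $C_1$ and $C_2$ are distinct and let $\ell$ be the perpendicular bisector of the segment connecting them. Then for $i\in\{1,2\}$, $D\subseteq C_i$ for every $D\in\mathcal{D}$ whose center lies on the same (closed) side of $\ell$ as the center of $C_i$.
   Context: Disks are closed disks in the plane. The paper assumes throughout that no disk of $\mathcal{D}$ contains another disk of $\mathcal{D}$. *)

theory Defs
  imports "HOL-Analysis.Analysis"
begin

text \<open>A disk is represented by its center (a point of the plane, type complex)
  and its radius r > 0; the disk itself is the closed ball cball c r.\<close>

definition disk_family :: "(complex \<times> real) set \<Rightarrow> bool" where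
  "disk_family \<D> \<longleftrightarrow> finite \<D> \<and> (\<forall>(c, r)\<in>\<D>. r > 0) \<and>
     (\<forall>(c, r)\<in>\<D>. \<forall>(c', r')\<in>\<D>. (c, r) \<noteq> (c', r') \<longrightarrow> \<not> cball c r \<subseteq> cball c' r')"

definition covers2 :: "(complex \<times> real) set \<Rightarrow> complex \<Rightarrow> complex \<Rightarrow> real \<Rightarrow> bool" where
  "covers2 \<D> p1 p2 s \<longleftrightarrow>
     (\<forall>(c, r)\<in>\<D>. cball c r \<subseteq> cball p1 s \<or> cball c r \<subseteq> cball p2 s)"

end

theory Submission
  imports Defs
begin

text \<open>Since the two covering disks are congruent, whether a disk \<open>D\<close> fits into one of them
  depends only on the distance of its center to the center of that disk: \<open>D \<subseteq> cball p s\<close>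
  iff \<open>dist c p + r \<le> s\<close>. Hence if \<open>D\<close> fits into the covering disk whose center is farther
  away, it also fits into the nearer one.\<close>

lemma cball_subset_cball_nearer_center:
  fixes c p q :: "'a::euclidean_space"
  assumes "dist c p \<le> dist c q" and "cball c r \<subseteq> cball q s"
  shows "cball c r \<subseteq> cball p s"
  using assms by (auto simp: cball_subset_cball_iff dist_commute)

lemma covers2_commute: "covers2 \<D> p q s \<longleftrightarrow> covers2 \<D> q p s"
  unfolding covers2_def by blast

lemma covers2_nearer_center:
  assumes "covers2 \<D> p q s" and "(c, r) \<in> \<D>" and "dist c p \<le> dist c q"
  shows "cball c r \<subseteq> cball p s"
  using assms cball_subset_cball_nearer_center[of c p q r s] unfolding covers2_def by blast

theorem mainTheorem14:
  fixes \<D> :: "(complex \<times> real) set" and p1 p2 :: complex and \<rho> :: real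
  assumes "disk_family \<D>"
    and "\<rho> > 0"
    and "covers2 \<D> p1 p2 \<rho>"
    and "\<forall>q1 q2 s. s > 0 \<and> covers2 \<D> q1 q2 s \<longrightarrow> \<rho> \<le> s"
    and "p1 \<noteq> p2"
  shows "(\<forall>(c, r)\<in>\<D>. dist c p1 \<le> dist c p2 \<longrightarrow> cball c r \<subseteq> cball p1 \<rho>) \<and>
         (\<forall>(c, r)\<in>\<D>. dist c p2 \<le> dist c p1 \<longrightarrow> cball c r \<subseteq> cball p2 \<rho>)"
proof -
  have "covers2 \<D> p2 p1 \<rho>"
    using assms(3) covers2_commute by blast
  then show ?thesis
    using covers2_nearer_center[OF assms(3)] covers2_nearer_center[of \<D> p2 p1 \<rho>] by blast
qed

end
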